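(* If UE $k \in \mathcal{S}_t$ estimates $\alpha_t$ as \begin{equation} \hat{\alpha}_{t,k} = \max \bigg( \bigg( \frac{\Gamma \left( M + \frac{1}{2} \right) }{ \Gamma \left( M \right) } \bigg)^2 \frac{ q \rho_k \beta_k^2 \tau_p^2 }{ \left( \Re ( z_k ) \right)^2 } - \sigma^2, \, \rho_k \beta_k \tau_p \bigg) \end{equation} and repeats its pilot if and only if $\rho_k\beta_k\tau_p > \hat{\alpha}_{t,k}/2+\epsilon_k$ (event $\mathcal{R}_k$), with bias $\epsilon_k < \rho_k \beta_k \tau_p/2$, then \begin{equation} \Pr \{ \mathcal{R}_{k} \} = 1 - \Pr \{ \Re ( z_k ) \leq \sqrt{\zeta_k} \} + \Pr \{ \Re ( z_k ) \leq - \sqrt{\zeta_k} \} \end{equation} where \begin{equation} \zeta_k = \bigg( \frac{\Gamma \left( M + \frac{1}{2} \right) }{ \Gamma \left( M \right) } \bigg)^2 \frac{q \rho_k \beta_k^2 \tau_p^2 }{\sigma^2+2( \rho_k \beta_k \tau_p - \epsilon_k) } \end{equation} and \begin{align} & \Pr \{ \Re ( z_k ) \leq b \} = Q \left(-\frac{b \sqrt{2}}{\sqrt{\lambda_2}} \right) - \sum_{k=0}^{M-1} \frac{ e^{- \frac{b^2}{\lambda_2} \left( 1 - \frac{\lambda_1}{\lambda_1 + \lambda_2} \right)} }{\Gamma(k+1) \lambda_1^k \sqrt{\pi \lambda_2 }} \notag \\ & \times \sum_{n=0}^{2k} {2k \choose n} \frac{\left( \Gamma \left( \frac{n+1}{2}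 \right) + c_n(b) \gamma \left( \frac{n+1}{2} , \frac{b^2}{\lambda_2} \frac{\lambda_1}{\lambda_1+\lambda_2} \right) \right) }{ 2 \left( \frac{b}{\lambda_2} \right)^{n-2k} \left( \frac{1}{\lambda_1} + \frac{1}{\lambda_2} \right)^{2k+\frac{1}{2}-\frac{n}{2}} } . \end{align} Here $Q(x)=\frac{1}{\sqrt{2 \pi}} \int_{x}^{\infty} e^{-t^2/2}dt$, $\gamma(\cdot,\cdot)$ is the lower incomplete gamma function, $c_n(b)=(-1)^n$ if $b\ge0$ and $c_n(b)=-1$ if $b<0$, $\lambda_1 = \frac{\rho_k q \beta_k^2 \tau_p^2}{\alpha_t + \sigma^2}$ and $\lambda_2 = \sigma^2 + \Upsilon_k + q \beta_k \tau_p - \lambda_1$.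
   Context: A BS with $M$ antennas; $\tau_p$ orthogonal uplink pilots $\boldsymbol{\psi}_t$ with $\|\boldsymbol{\psi}_t\|^2=\tau_p$; $\mathcal{S}_t$ is the set of UEs sending pilot $t$, UE $i$ using power $\rho_i>0$. Uncorrelated Rayleigh fading $\mathbf{h}_k\sim\mathcal{CN}(\mathbf{0},\beta_k\mathbf{I}_M)$, independent across UEs. The BS obtains $\mathbf{y}_t=\sum_{i\in\mathcal{S}_t}\sqrt{\rho_i\tau_p}\,\mathbf{h}_i+(\text{inter-cell interference of per-antenna power }\omega_t)+\mathbf{n}_t$, $\mathbf{n}_t\sim\mathcal{CN}(\mathbf{0},\sigma^2\mathbf{I}_M)$, and $\alpha_t=\sum_{i\in\mathcal{S}_t}\rho_i\beta_i\tau_p+\omega_t$. It transmits $\mathbf{V}=\sqrt{q}\sum_t\frac{\mathbf{y}_t^*}{\|\mathbf{y}_t\|}\boldsymbol{\phi}_t^{\mathrm{T}}$ with orthogonal $\boldsymbol{\phi}_t$, $\|\boldsymbol{\phi}_t\|^2=\tau_p$. UE $k\in\mathcal{S}_t$ observes $z_k=\sqrt{q\tau_p}\,\mathbf{h}_k^{\mathrm{T}}\frac{\mathbf{y}_t^*}{\|\mathbf{y}_t\|}+\boldsymbol{\upsilon}_k^{\mathrm{T}}\frac{\boldsymbol{\phi}_t^*}{\|\boldsymbol{\phi}_t\|}+\eta_k$ with $\boldsymbol{\upsilon}_k\sim\mathcal{CN}(\mathbf{0},\Upsilon_k\mathbf{I}_{\tau_p})$ independent inter-cell interference and $\eta_k\sim\mathcal{CN}(0,\sigma^2)$;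 thus $z_k=g_k+\nu_k$ with independent $g_k=\sqrt{\lambda_1/2}\,x$, $x\sim\chi_{2M}$, and $\nu_k\sim\mathcal{CN}(0,\lambda_2)$. *)

theory Defs
  imports "HOL-Probability.Probability"
begin

definition Qfun :: "real \<Rightarrow> real" where
  "Qfun x = (LBINT t=ereal x..\<infinity>. exp (- (t\<^sup>2) / 2)) / sqrt (2 * pi)"

definition lower_inc_gamma :: "real \<Rightarrow> real \<Rightarrow> real" where
  "lower_inc_gamma s x = (LBINT t=0..ereal x. t powr (s - 1) * exp (- t))"

definition chi_density :: "nat \<Rightarrow> real \<Rightarrow> real" where
  "chi_density k x = (if x \<ge> 0 then
      x ^ (k - 1) * exp (- (x\<^sup>2) / 2) / (2 powr (real k / 2 - 1) * Gamma (real k / 2))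
    else 0)"

(* nu ~ CN(0, s2): real and imaginary parts independent N(0, s2/2) *)
definition complex_gaussian :: "'a measure \<Rightarrow> ('a \<Rightarrow> complex) \<Rightarrow> real \<Rightarrow> bool" where
  "complex_gaussian P nu s2 \<longleftrightarrow>
     nu \<in> borel_measurable P \<and>
     distributed P lborel (\<lambda>w. Re (nu w)) (normal_density 0 (sqrt (s2 / 2))) \<and>
     distributed P lborel (\<lambda>w. Im (nu w)) (normal_density 0 (sqrt (s2 / 2))) \<and>
     prob_space.indep_var P borel (\<lambda>w. Re (nu w)) borel (\<lambda>w. Im (nu w))"

definition c_coef :: "nat \<Rightarrow> real \<Rightarrow> real" where
  "c_coef n b = (if b \<ge> 0 then (-1) ^ n else -1)"

definition re_cdf_expr :: "nat \<Rightarrow> real \<Rightarrow> real \<Rightarrow> real \<Rightarrow> real" where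
  "re_cdf_expr M l1 l2 b =
     Qfun (- (b * sqrt 2) / sqrt l2)
     - (\<Sum>j = 0..M - 1.
          exp (- (b\<^sup>2 / l2) * (1 - l1 / (l1 + l2)))
            / (Gamma (real j + 1) * l1 ^ j * sqrt (pi * l2))
          * (\<Sum>n = 0..2 * j.
               real ((2 * j) choose n)
               * (Gamma ((real n + 1) / 2)
                  + c_coef n b * lower_inc_gamma ((real n + 1) / 2) (b\<^sup>2 / l2 * (l1 / (l1 + l2))))
               / (2 * (b / l2) powi (int n - 2 * int j)
                    * (1 / l1 + 1 / l2) powr (2 * real j + 1 / 2 - real n / 2))))"

end

theory Submission
  imports Defs
begin

text \<open>Write \<open>Re z = a x + N\<close> with \<open>a = sqrt (\<lambda>\<^sub>1 / 2)\<close>, where \<open>x\<close> is chi distributed with \<open>2M\<close>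
  degrees of freedom and \<open>N = Re \<nu>\<close> is an independent \<open>N(0, \<lambda>\<^sub>2 / 2)\<close> variable. Conditioning on \<open>N\<close>,
  \<open>Pr {Re z \<le> b} = \<integral> f\<^sub>N(v) F((b - v) / a) dv\<close>, and for an even number of degrees of freedom the chi CDF is
  elementary: \<open>F(y) = 1 - e\<^sup>-\<^sup>y\<^sup>2\<^sup>/\<^sup>2 \<Sum>\<^sub>j\<^sub><\<^sub>M (y\<^sup>2/2)\<^sup>j / j!\<close>. The constant term yields the Q-function. In the
  \<open>j\<close>-th term, completing the square in \<open>exp (- v\<^sup>2/\<lambda>\<^sub>2 - (b - v)\<^sup>2/\<lambda>\<^sub>1)\<close> and expanding \<open>(b - v)\<^sup>2\<^sup>j\<close>
  binomially leaves half-line Gaussian moments \<open>\<integral>\<^sub>-\<^sub>m\<^sup>\<infinity> w\<^sup>n e\<^sup>-\<^sup>A\<^sup>w\<^sup>2 dw\<close>, which the substitution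
  \<open>t = w\<^sup>2\<close> turns into complete and lower incomplete gamma functions. Finally, solving the repetition
  condition for \<open>Re z\<close> gives \<open>\<bar>Re z\<bar> > sqrt \<zeta>\<close>, and \<open>Re z\<close> has no atoms.\<close>

section \<open>The chi distribution with an even number of degrees of freedom\<close>

definition chi_tail :: "nat \<Rightarrow> real \<Rightarrow> real" where
  "chi_tail m u = exp (- (u\<^sup>2 / 2)) * (\<Sum>j<m. (u\<^sup>2 / 2) ^ j / fact j)"

definition chi_cdf :: "nat \<Rightarrow> real \<Rightarrow> real" where
  "chi_cdf m y = (if y \<ge> 0 then 1 - chi_tail m y else 0)"

lemma chi_tail_has_real_derivative:
  "(chi_tail (Suc m) has_real_derivative - (u * exp (- (u\<^sup>2 / 2)) * (u\<^sup>2 / 2) ^ m / fact m)) (at u)"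
proof (induction m)
  case 0
  show ?case
    unfolding chi_tail_def by (auto intro!: derivative_eq_intros)
next
  case (Suc m)
  let ?E = "exp (- (u\<^sup>2 / 2))" and ?h = "u\<^sup>2 / 2"
  have chi_tail_Suc: "chi_tail (Suc (Suc m)) = (\<lambda>u. chi_tail (Suc m) u + exp (- (u\<^sup>2 / 2)) * (u\<^sup>2 / 2) ^ Suc m / fact (Suc m))"
    by (auto simp: chi_tail_def fun_eq_iff algebra_simps)
  have new_term: "((\<lambda>u. exp (- (u\<^sup>2 / 2)) * (u\<^sup>2 / 2) ^ Suc m / fact (Suc m)) has_real_derivative
          (?E * (- u) * ?h ^ Suc m + ?E * (real (Suc m) * ?h ^ m * u)) / fact (Suc m)) (at u)"
    by (rule derivative_eq_intros refl | simp)+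
  have field_identity: "- (u * E * T / F) + (E * (- u) * (h * T) + E * (k * T * u)) / (k * F)
      = - (u * E * (h * T) / (k * F))" if "F \<noteq> 0" "k \<noteq> 0" for E T h F k :: real
    using that by (simp add: field_simps)
  have "- (u * ?E * ?h ^ m / fact m) + (?E * (- u) * ?h ^ Suc m + ?E * (real (Suc m) * ?h ^ m * u)) / fact (Suc m)
      = - (u * ?E * ?h ^ Suc m / fact (Suc m))"
    using field_identity[of "fact m" "real (Suc m)" ?E "?h ^ m" ?h] by (simp only: power_Suc fact_Suc of_nat_mult mult_ac) simp
  then show ?case
    unfolding chi_tail_Suc by (rule DERIV_cong[OF DERIV_add[OF Suc new_term]])
qed

lemma chi_density_even_dof:
  assumes "u \<ge> 0"
  shows "chi_density (2 * Suc m) u = u * exp (- (u\<^sup>2 / 2)) * (u\<^sup>2 / 2) ^ m / fact m"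
proof -
  have dof: "real (2 * Suc m) / 2 = 1 + real m" by simp
  have "u ^ (2 * Suc m - 1) = u * (u\<^sup>2) ^ m" by (simp add: power_mult[symmetric])
  then show ?thesis
    using assms unfolding chi_density_def dof Gamma_fact by (simp add: powr_realpow power_divide)
qed

lemma chi_density_has_integral:
  assumes "y \<ge> 0"
  shows "(chi_density (2 * Suc m) has_integral 1 - chi_tail (Suc m) y) {0..y}"
proof (rule has_integral_eq)
  let ?f = "\<lambda>u. u * exp (- (u\<^sup>2 / 2)) * (u\<^sup>2 / 2) ^ m / fact m"
  show "?f u = chi_density (2 * Suc m) u" if "u \<in> {0..y}" for u
    using that chi_density_even_dof[of u m] by simp
  have "(?f has_integral (- chi_tail (Suc m) y) - (- chi_tail (Suc m) 0)) {0..y}"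
  proof (rule fundamental_theorem_of_calculus)
    show "((\<lambda>u. - chi_tail (Suc m) u) has_vector_derivative ?f u) (at u within {0..y})" for u
      using DERIV_minus[OF chi_tail_has_real_derivative[of m u]]
      by (simp add: has_real_derivative_iff_has_vector_derivative[symmetric] has_field_derivative_at_within)
  qed (use assms in auto)
  moreover have "chi_tail (Suc m) 0 = 1"
    unfolding chi_tail_def by (simp only: sum.lessThan_Suc_shift) simp
  ultimately show "(?f has_integral 1 - chi_tail (Suc m) y) {0..y}" by simp
qed

lemma chi_density_nonneg: "chi_density (2 * Suc m) u \<ge> 0"
  by (cases "u \<ge> 0") (auto simp: chi_density_even_dof chi_density_def)

lemma chi_cdf_nonneg: "chi_cdf (Suc m) y \<ge> 0"
  using has_integral_nonneg[OF chi_density_has_integral chi_density_nonneg, of y m]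
  by (simp add: chi_cdf_def)

lemma chi_cdf_le_1: "chi_cdf m y \<le> 1"
proof -
  have "chi_tail m y \<ge> 0"
    unfolding chi_tail_def by (intro mult_nonneg_nonneg sum_nonneg) auto
  then show ?thesis by (simp add: chi_cdf_def)
qed

lemma nn_integral_chi_density_atMost:
  "(\<integral>\<^sup>+u. ennreal (chi_density (2 * Suc m) u) * indicator {..y} u \<partial>lborel) = ennreal (chi_cdf (Suc m) y)"
proof (cases "y \<ge> 0")
  case True
  have "(\<integral>\<^sup>+u. ennreal (chi_density (2 * Suc m) u) * indicator {..y} u \<partial>lborel)
      = (\<integral>\<^sup>+u. ennreal (chi_density (2 * Suc m) u) * indicator {0..y} u \<partial>lborel)"
    by (rule nn_integral_cong) (auto simp: indicator_def chi_density_def)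
  also have "\<dots> = ennreal (1 - chi_tail (Suc m) y)"
    using True by (intro nn_integral_has_integral_lebesgue' chi_density_has_integral chi_density_nonneg)
  finally show ?thesis using True by (simp add: chi_cdf_def)
next
  case False
  then show ?thesis
    by (auto intro!: nn_integral_zero' simp: indicator_def chi_density_def chi_cdf_def)
qed

section \<open>Gaussian moments over half-lines\<close>

definition gauss_power :: "nat \<Rightarrow> real \<Rightarrow> real" where
  "gauss_power n w = w ^ n * exp (- (w\<^sup>2))"

lemma gauss_power_borel [measurable]: "gauss_power n \<in> borel_measurable borel"
  unfolding gauss_power_def by measurable

lemma gauss_power_minus: "gauss_power n (- w) = (-1) ^ n * gauss_power n w"
  unfolding gauss_power_def by (subst power_minus) simp

lemma integrable_gauss_power: "integrable lborel (gauss_power n)"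
proof -
  have "integrable lborel (\<lambda>w. std_normal_density (0 + sqrt 2 * w) * (0 + sqrt 2 * w) ^ n)"
    by (rule lborel_integrable_real_affine[OF integrable_std_normal_moment]) simp
  then have "integrable lborel (\<lambda>w. sqrt (2 * pi) / sqrt 2 ^ n * (std_normal_density (sqrt 2 * w) * (sqrt 2 * w) ^ n))"
    by (simp add: integrable_mult_right)
  moreover have "sqrt (2 * pi) / sqrt 2 ^ n * (std_normal_density (sqrt 2 * w) * (sqrt 2 * w) ^ n) = gauss_power n w" for w
  proof -
    have "- ((sqrt 2)\<^sup>2 * w\<^sup>2) / 2 = - (w\<^sup>2)" by simp
    then have "std_normal_density (sqrt 2 * w) * (sqrt 2 * w) ^ n = exp (- (w\<^sup>2)) / sqrt (2 * pi) * (sqrt 2 ^ n * w ^ n)"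
      unfolding std_normal_density_def by (simp only: power_mult_distrib) simp
    then show ?thesis
      unfolding gauss_power_def by simp
  qed
  ultimately show ?thesis by simp
qed

lemma integrable_gauss_power_indicator:
  "A \<in> sets borel \<Longrightarrow> integrable lborel (\<lambda>w. indicator A w * gauss_power n w)"
  using integrable_real_mult_indicator[OF _ integrable_gauss_power, of A n] by (simp add: mult.commute)

lemma Gamma_eq_interval_integral:
  assumes "s > 0"
  shows "(LBINT t=0..\<infinity>. t powr (s - 1) * exp (- t)) = Gamma s"
proof -
  have "(LBINT t=0..\<infinity>. t powr (s - 1) * exp (- t)) = (\<integral>t. indicator {0<..} t * (t powr (s - 1) * exp (- t)) \<partial>lborel)"
    by (simp add: interval_lebesgue_integral_def set_lebesgue_integral_def zero_ereal_def)
  also have "\<dots> = enn2real (\<integral>\<^sup>+t. ennreal (indicator {0<..} t * (t powr (s - 1) * exp (- t))) \<partial>lborel)"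
    by (rule integral_eq_nn_integral) auto
  also have "(\<integral>\<^sup>+t. ennreal (indicator {0<..} t * (t powr (s - 1) * exp (- t))) \<partial>lborel)
     = (\<integral>\<^sup>+t. ennreal (indicator {0..} t * t powr (s - 1) / exp t) \<partial>lborel)"
    by (rule nn_integral_cong) (auto simp: indicator_def exp_minus divide_inverse)
  also have "\<dots> = ennreal (Gamma s)"
    using Gamma_conv_nn_integral_real[OF assms] by simp
  finally show ?thesis using Gamma_real_pos[OF assms] by simp
qed

lemma interval_integral_gamma_square_substitution:
  fixes b B :: ereal
  assumes b: "0 < b" and B: "((ereal \<circ> (\<lambda>w. w\<^sup>2) \<circ> real_of_ereal) \<longlongrightarrow> B) (at_left b)"
  shows "(LBINT t=0..B. t powr ((real n + 1) / 2 - 1) * exp (- t)) = (LBINT w=0..b. 2 * gauss_power n w)"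
proof -
  let ?f = "\<lambda>t::real. t powr ((real n + 1) / 2 - 1) * exp (- t)"
  have on_interval: "?f (w\<^sup>2) * (2 * w) = 2 * gauss_power n w" if "w \<in> einterval 0 b" for w
  proof -
    from that have w: "w > 0" by (simp add: einterval_iff zero_ereal_def)
    then have "(w\<^sup>2) powr ((real n + 1) / 2 - 1) = (w powr 2) powr ((real n + 1) / 2 - 1)"
      by (simp add: powr_realpow)
    also have "\<dots> = w powr (2 * ((real n + 1) / 2 - 1))"
      by (simp add: powr_powr)
    also have "2 * ((real n + 1) / 2 - 1) = real n - 1"
      by simp
    finally have "(w\<^sup>2) powr ((real n + 1) / 2 - 1) = w powr (real n - 1)" .
    moreover have "w powr (real n - 1) * w = w ^ n"
      using w by (simp add: powr_diff powr_realpow[symmetric])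
    ultimately show ?thesis by (simp add: gauss_power_def algebra_simps)
  qed
  have integrable: "set_integrable lborel (einterval 0 b) (\<lambda>w. ?f (w\<^sup>2) * (2 * w))"
  proof -
    have "integrable lborel (\<lambda>w. 2 * gauss_power n w * indicator (einterval 0 b) w)"
      by (intro integrable_real_mult_indicator integrable_mult_right integrable_gauss_power) simp
    moreover have "2 * gauss_power n w * indicator (einterval 0 b) w = indicator (einterval 0 b) w *\<^sub>R (?f (w\<^sup>2) * (2 * w))" for w
      using on_interval by (auto simp: indicator_def)
    ultimately show ?thesis
      unfolding set_integrable_def by simp
  qed
  have "(LBINT t=0..B. ?f t) = (LBINT w=0..b. ?f (w\<^sup>2) * (2 * w))"
  proof (rule interval_integral_substitution_nonneg(2)[OF b _ _ _ _ _ _ B integrable])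
    show "((\<lambda>w. w\<^sup>2) has_real_derivative 2 * w) (at w)" for w :: real
      by (auto intro!: derivative_eq_intros)
    show "isCont ?f (w\<^sup>2)" if "0 < ereal w" for w
      using that by (auto intro!: continuous_intros simp: zero_ereal_def)
    show "((ereal \<circ> (\<lambda>w. w\<^sup>2) \<circ> real_of_ereal) \<longlongrightarrow> 0) (at_right 0)"
      by (simp add: zero_ereal_def ereal_tendsto_simps)
  qed (auto simp: zero_ereal_def)
  also have "\<dots> = (LBINT w=0..b. 2 * gauss_power n w)"
  proof (rule interval_integral_cong)
    have "einterval (min 0 b) (max 0 b) = einterval 0 b"
      using b by (simp add: min_absorb1 max_absorb2)
    then show "?f (w\<^sup>2) * (2 * w) = 2 * gauss_power n w" if "w \<in> einterval (min 0 b) (max 0 b)" for w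
      using on_interval that by blast
  qed
  finally show ?thesis .
qed

lemma integral_gauss_power_atLeast_0:
  "(\<integral>w. indicator {0..} w * gauss_power n w \<partial>lborel) = Gamma ((real n + 1) / 2) / 2"
proof -
  have lim: "((ereal \<circ> (\<lambda>w. w\<^sup>2) \<circ> real_of_ereal) \<longlongrightarrow> \<infinity>) (at_left \<infinity>)"
    by (simp add: ereal_tendsto_simps filterlim_pow_at_top filterlim_ident)
  have "Gamma ((real n + 1) / 2) = (LBINT t=0..\<infinity>. t powr ((real n + 1) / 2 - 1) * exp (- t))"
    by (rule Gamma_eq_interval_integral[symmetric]) simp
  also have "\<dots> = (LBINT w=0..\<infinity>. 2 * gauss_power n w)"
    by (rule interval_integral_gamma_square_substitution[OF _ lim]) simp
  also have "\<dots> = 2 * (\<integral>w. indicator {0<..} w * gauss_power n w \<partial>lborel)"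
    by (simp add: interval_lebesgue_integral_def set_lebesgue_integral_def zero_ereal_def)
  also have "(\<integral>w. indicator {0<..} w * gauss_power n w \<partial>lborel) = (\<integral>w. indicator {0..} w * gauss_power n w \<partial>lborel)"
  proof (rule integral_cong_AE)
    show "AE w in lborel. indicator {0<..} w * gauss_power n w = indicator {0..} w * gauss_power n w"
      using AE_lborel_singleton[of 0] by eventually_elim (auto simp: indicator_def)
  qed auto
  finally show ?thesis by simp
qed

lemma integral_gauss_power_atLeastAtMost_0:
  assumes "y \<ge> 0"
  shows "(\<integral>w. indicator {0..y} w * gauss_power n w \<partial>lborel) = lower_inc_gamma ((real n + 1) / 2) (y\<^sup>2) / 2"
proof (cases "y = 0")
  case True
  have "(\<integral>w. indicator {0..y} w * gauss_power n w \<partial>lborel) = 0"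
    by (rule integral_eq_zero_AE) (use AE_lborel_singleton[of 0] in \<open>eventually_elim, auto simp: indicator_def True\<close>)
  then show ?thesis
    using True by (simp add: lower_inc_gamma_def zero_ereal_def einterval_same interval_lebesgue_integral_def set_lebesgue_integral_def)
next
  case False
  with assms have y: "y > 0" by simp
  have lim: "((ereal \<circ> (\<lambda>w. w\<^sup>2) \<circ> real_of_ereal) \<longlongrightarrow> ereal (y\<^sup>2)) (at_left (ereal y))"
    by (simp add: ereal_tendsto_simps) (auto intro!: tendsto_eq_intros)
  have "lower_inc_gamma ((real n + 1) / 2) (y\<^sup>2) = (LBINT w=0..ereal y. 2 * gauss_power n w)"
    unfolding lower_inc_gamma_def
    by (rule interval_integral_gamma_square_substitution[OF _ lim]) (simp add: y zero_ereal_def)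
  also have "\<dots> = 2 * (\<integral>w. indicator {0<..<y} w * gauss_power n w \<partial>lborel)"
    using y by (simp add: interval_lebesgue_integral_def set_lebesgue_integral_def zero_ereal_def)
  also have "(\<integral>w. indicator {0<..<y} w * gauss_power n w \<partial>lborel) = (\<integral>w. indicator {0..y} w * gauss_power n w \<partial>lborel)"
  proof (rule integral_cong_AE)
    show "AE w in lborel. indicator {0<..<y} w * gauss_power n w = indicator {0..y} w * gauss_power n w"
      using AE_lborel_singleton[of 0] AE_lborel_singleton[of y] by eventually_elim (auto simp: indicator_def)
  qed auto
  finally show ?thesis by simp
qed

lemma integral_gauss_power_atLeast:
  "(\<integral>w. indicator {c..} w * gauss_power n w \<partial>lborel)
     = (Gamma ((real n + 1) / 2) + c_coef n (- c) * lower_inc_gamma ((real n + 1) / 2) (c\<^sup>2)) / 2"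
proof (cases "c \<le> 0")
  case True
  have "(\<integral>w. indicator {c..} w * gauss_power n w \<partial>lborel)
      = (\<integral>w. indicator {0..} w * gauss_power n w + indicator {c..0} w * gauss_power n w \<partial>lborel)"
  proof (rule integral_cong_AE)
    show "AE w in lborel. indicator {c..} w * gauss_power n w = indicator {0..} w * gauss_power n w + indicator {c..0} w * gauss_power n w"
      using AE_lborel_singleton[of 0] by eventually_elim (use True in \<open>auto simp: indicator_def\<close>)
  qed auto
  also have "\<dots> = (\<integral>w. indicator {0..} w * gauss_power n w \<partial>lborel) + (\<integral>w. indicator {c..0} w * gauss_power n w \<partial>lborel)"
    by (intro Bochner_Integration.integral_add integrable_gauss_power_indicator) auto
  also have "(\<integral>w. indicator {c..0} w * gauss_power n w \<partial>lborel)
      = (\<integral>w. indicator {c..0} (0 + (-1) * w) * gauss_power n (0 + (-1) * w) \<partial>lborel)"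
    using lborel_integral_real_affine[of "-1" "\<lambda>w. indicator {c..0} w * gauss_power n w" 0] by simp
  also have "\<dots> = (\<integral>w. (-1) ^ n * (indicator {0..-c} w * gauss_power n w) \<partial>lborel)"
    by (rule Bochner_Integration.integral_cong) (auto simp: indicator_def gauss_power_minus)
  also have "\<dots> = (-1) ^ n * (lower_inc_gamma ((real n + 1) / 2) (c\<^sup>2) / 2)"
    using integral_gauss_power_atLeastAtMost_0[of "-c" n] True by simp
  finally show ?thesis
    using True by (simp add: integral_gauss_power_atLeast_0 c_coef_def add_divide_distrib)
next
  case False
  have "(\<integral>w. indicator {c..} w * gauss_power n w \<partial>lborel)
      = (\<integral>w. indicator {0..} w * gauss_power n w - indicator {0..c} w * gauss_power n w \<partial>lborel)"
  proof (rule integral_cong_AE)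
    show "AE w in lborel. indicator {c..} w * gauss_power n w = indicator {0..} w * gauss_power n w - indicator {0..c} w * gauss_power n w"
      using AE_lborel_singleton[of c] by eventually_elim (use False in \<open>auto simp: indicator_def\<close>)
  qed auto
  also have "\<dots> = (\<integral>w. indicator {0..} w * gauss_power n w \<partial>lborel) - (\<integral>w. indicator {0..c} w * gauss_power n w \<partial>lborel)"
    by (intro Bochner_Integration.integral_diff integrable_gauss_power_indicator) auto
  finally show ?thesis
    using False by (simp add: integral_gauss_power_atLeast_0 integral_gauss_power_atLeastAtMost_0 c_coef_def diff_divide_distrib)
qed

lemma integrable_gauss_power_scaled:
  fixes A :: real
  assumes "A > 0"
  shows "integrable lborel (\<lambda>w. w ^ n * exp (- (A * w\<^sup>2)))"
proof -
  have "integrable lborel (\<lambda>w. gauss_power n (0 + sqrt A * w))"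
    by (rule lborel_integrable_real_affine[OF integrable_gauss_power]) (use assms in simp)
  then have "integrable lborel (\<lambda>w. 1 / sqrt A ^ n * gauss_power n (0 + sqrt A * w))"
    by (rule integrable_mult_right)
  moreover have "1 / sqrt A ^ n * gauss_power n (0 + sqrt A * w) = w ^ n * exp (- (A * w\<^sup>2))" for w
    using assms by (simp add: gauss_power_def power_mult_distrib)
  ultimately show ?thesis by simp
qed

lemma integral_gauss_power_scaled_atLeast:
  fixes A :: real
  assumes A: "A > 0"
  shows "(\<integral>w. indicator {-m..} w * (w ^ n * exp (- (A * w\<^sup>2))) \<partial>lborel)
     = (Gamma ((real n + 1) / 2) + c_coef n m * lower_inc_gamma ((real n + 1) / 2) (A * m\<^sup>2))
        / (2 * A powr ((real n + 1) / 2))"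
proof -
  let ?c = "1 / sqrt A"
  have c: "?c \<noteq> 0" using A by simp
  have "(\<integral>w. indicator {-m..} w * (w ^ n * exp (- (A * w\<^sup>2))) \<partial>lborel)
      = \<bar>?c\<bar> * (\<integral>r. indicator {-m..} (0 + ?c * r) * ((0 + ?c * r) ^ n * exp (- (A * (0 + ?c * r)\<^sup>2))) \<partial>lborel)"
    using lborel_integral_real_affine[OF c, of "\<lambda>w. indicator {-m..} w * (w ^ n * exp (- (A * w\<^sup>2)))" 0] by simp
  also have "(\<integral>r. indicator {-m..} (0 + ?c * r) * ((0 + ?c * r) ^ n * exp (- (A * (0 + ?c * r)\<^sup>2))) \<partial>lborel)
      = (\<integral>r. ?c ^ n * (indicator {-m * sqrt A..} r * gauss_power n r) \<partial>lborel)"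
  proof (rule Bochner_Integration.integral_cong)
    fix r :: real
    have "A * (?c * r)\<^sup>2 = r\<^sup>2" using A by (simp add: power_mult_distrib power_divide)
    moreover have "-m \<le> ?c * r \<longleftrightarrow> -m * sqrt A \<le> r" using A by (simp add: field_simps)
    ultimately show "indicator {-m..} (0 + ?c * r) * ((0 + ?c * r) ^ n * exp (- (A * (0 + ?c * r)\<^sup>2)))
        = ?c ^ n * (indicator {-m * sqrt A..} r * gauss_power n r)"
      unfolding gauss_power_def by (simp add: indicator_def power_mult_distrib power_divide)
  qed simp
  also have "(\<integral>r. ?c ^ n * (indicator {-m * sqrt A..} r * gauss_power n r) \<partial>lborel)
     = ?c ^ n * ((Gamma ((real n + 1) / 2) + c_coef n m * lower_inc_gamma ((real n + 1) / 2) (A * m\<^sup>2)) / 2)"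
  proof -
    have "(-m * sqrt A)\<^sup>2 = A * m\<^sup>2" "c_coef n (- (-m * sqrt A)) = c_coef n m"
      using A by (simp_all add: power_mult_distrib c_coef_def zero_le_mult_iff)
    then show ?thesis
      using integral_gauss_power_atLeast[of "-m * sqrt A" n] by simp
  qed
  also have "\<bar>?c\<bar> * ?c ^ n = 1 / A powr ((real n + 1) / 2)"
  proof -
    have "\<bar>?c\<bar> * ?c ^ n = 1 / sqrt A ^ (n + 1)"
      using A by (simp add: power_divide)
    also have "sqrt A ^ (n + 1) = A powr ((real n + 1) / 2)"
      using A by (simp add: powr_half_sqrt[symmetric] powr_realpow[symmetric] powr_powr powr_add[symmetric] add_divide_distrib add.commute)
    finally show ?thesis .
  qed
  ultimately show ?thesis by (simp add: field_simps)
qed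

section \<open>Integrating the chi CDF against the Gaussian density\<close>

lemma exp_complete_square:
  fixes l1 l2 b w :: real
  assumes l1: "l1 > 0" and l2: "l2 > 0"
  defines "m \<equiv> b * l1 / (l1 + l2)"
  shows "exp (- ((b - m - w)\<^sup>2) / l2) * exp (- ((m + w)\<^sup>2) / l1)
       = exp (- (b\<^sup>2 / (l1 + l2))) * exp (- ((1 / l1 + 1 / l2) * w\<^sup>2))"
proof -
  define D where "D = l1 + l2"
  have D: "D \<noteq> 0" using l1 l2 unfolding D_def by simp
  have "b - m = b * l2 / D"
    unfolding m_def D_def[symmetric] using D by (simp add: field_simps D_def)
  moreover have "- ((b * l2 / D - w)\<^sup>2) / l2 + - ((b * l1 / D + w)\<^sup>2) / l1 = - (b\<^sup>2 / D) + - ((1 / l1 + 1 / l2) * w\<^sup>2)"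
    using l1 l2 D by (simp add: field_simps power2_eq_square) (simp add: D_def algebra_simps)
  ultimately have "- ((b - m - w)\<^sup>2) / l2 + - ((m + w)\<^sup>2) / l1 = - (b\<^sup>2 / (l1 + l2)) + - ((1 / l1 + 1 / l2) * w\<^sup>2)"
    unfolding m_def D_def by simp
  then show ?thesis by (simp flip: exp_add)
qed

text \<open>Up to the factor \<open>1 / (j! \<lambda>\<^sub>1\<^sup>j sqrt (\<pi> \<lambda>\<^sub>2))\<close>, the \<open>j\<close>-th summand of the chi tail at \<open>(b - v) / a\<close>
  weighted by the density of \<open>N\<close>.\<close>

definition chi_normal_term :: "real \<Rightarrow> real \<Rightarrow> real \<Rightarrow> nat \<Rightarrow> real \<Rightarrow> real" where
  "chi_normal_term l1 l2 b j v =
     indicator {..b} v * (exp (- (v\<^sup>2) / l2) * exp (- ((b - v)\<^sup>2) / l1) * (b - v) ^ (2 * j))"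

lemma chi_normal_term_shift:
  fixes l1 l2 b :: real
  assumes "l1 > 0" and "l2 > 0"
  defines "m \<equiv> b * l1 / (l1 + l2)" and "A \<equiv> 1 / l1 + 1 / l2"
  shows "chi_normal_term l1 l2 b j (b - m - w)
       = (\<Sum>n=0..2*j. exp (- (b\<^sup>2 / (l1 + l2))) * real (2*j choose n) * m ^ (2*j - n)
                        * (indicator {-m..} w * (w ^ n * exp (- (A * w\<^sup>2)))))"
proof -
  have "(m + w) ^ (2*j) = (\<Sum>n=0..2*j. real (2*j choose n) * w ^ n * m ^ (2*j - n))"
    using binomial_ring[of w m "2*j"] by (simp add: add.commute atLeast0AtMost)
  moreover have "indicator {..b} (b - m - w) = (indicator {-m..} w :: real)"
    by (simp add: indicator_def)
  ultimately show ?thesis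
    using exp_complete_square[OF assms(1,2), of b w]
    unfolding chi_normal_term_def m_def[symmetric] A_def[symmetric]
    by (simp add: sum_distrib_left sum_distrib_right mult_ac)
qed

lemma
  fixes l1 l2 b :: real
  assumes l1: "l1 > 0" and l2: "l2 > 0"
  defines "m \<equiv> b * l1 / (l1 + l2)" and "A \<equiv> 1 / l1 + 1 / l2"
  shows integrable_chi_normal_term: "integrable lborel (chi_normal_term l1 l2 b j)"
    and integral_chi_normal_term_expand: "(\<integral>v. chi_normal_term l1 l2 b j v \<partial>lborel)
       = (\<Sum>n=0..2*j. exp (- (b\<^sup>2 / (l1 + l2))) * real (2*j choose n) * m ^ (2*j - n)
                        * (\<integral>w. indicator {-m..} w * (w ^ n * exp (- (A * w\<^sup>2))) \<partial>lborel))"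
proof -
  have A: "A > 0" unfolding A_def using l1 l2 by (simp add: add_pos_pos)
  let ?g = "\<lambda>n w. exp (- (b\<^sup>2 / (l1 + l2))) * real (2*j choose n) * m ^ (2*j - n)
                   * (indicator {-m..} w * (w ^ n * exp (- (A * w\<^sup>2))))"
  have shift: "chi_normal_term l1 l2 b j ((b - m) + (-1) * w) = (\<Sum>n=0..2*j. ?g n w)" for w
    using chi_normal_term_shift[OF l1 l2, of b j w] unfolding m_def A_def by simp
  have integrable: "integrable lborel (?g n)" for n
    using integrable_real_mult_indicator[OF _ integrable_gauss_power_scaled[OF A], of "{-m..}" n]
    by (intro integrable_mult_right) (simp add: mult.commute)
  then have "integrable lborel (\<lambda>w. chi_normal_term l1 l2 b j ((b - m) + (-1) * w))"
    unfolding shift by (intro Bochner_Integration.integrable_sum)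
  then show "integrable lborel (chi_normal_term l1 l2 b j)"
    using lborel_integrable_real_affine_iff[of "-1" "chi_normal_term l1 l2 b j" "b - m"] by simp
  have "(\<integral>v. chi_normal_term l1 l2 b j v \<partial>lborel) = (\<integral>w. chi_normal_term l1 l2 b j ((b - m) + (-1) * w) \<partial>lborel)"
    using lborel_integral_real_affine[of "-1" "chi_normal_term l1 l2 b j" "b - m"] by simp
  also have "\<dots> = (\<Sum>n=0..2*j. \<integral>w. ?g n w \<partial>lborel)"
    unfolding shift by (intro Bochner_Integration.integral_sum integrable)
  finally show "(\<integral>v. chi_normal_term l1 l2 b j v \<partial>lborel)
       = (\<Sum>n=0..2*j. exp (- (b\<^sup>2 / (l1 + l2))) * real (2*j choose n) * m ^ (2*j - n)
                        * (\<integral>w. indicator {-m..} w * (w ^ n * exp (- (A * w\<^sup>2))) \<partial>lborel))"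
    by simp
qed

text \<open>Brings the factor \<open>m\<^sup>2\<^sup>j\<^sup>-\<^sup>n / A\<^sup>(\<^sup>n\<^sup>+\<^sup>1\<^sup>)\<^sup>/\<^sup>2\<close> produced by the shift and the scaling into the
  form of the denominator in the closed-form CDF.\<close>

lemma power_binomial_coefficient_rescale:
  fixes l1 l2 b X :: real
  assumes l1: "l1 > 0" and l2: "l2 > 0" and n: "n \<le> 2 * j"
  defines "A \<equiv> 1 / l1 + 1 / l2" and "m \<equiv> b * l1 / (l1 + l2)"
  shows "m ^ (2 * j - n) * (X / (2 * A powr ((real n + 1) / 2)))
       = X / (2 * (b / l2) powi (int n - 2 * int j) * A powr (2 * real j + 1 / 2 - real n / 2))"
proof -
  have A: "A > 0" unfolding A_def using l1 l2 by (simp add: add_pos_pos)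
  have "m = (b / l2) / A" unfolding m_def A_def using l1 l2 by (simp add: field_simps)
  then have "m ^ (2 * j - n) = (b / l2) ^ (2 * j - n) / A powr real (2 * j - n)"
    using A by (simp add: power_divide power_mult_distrib powr_realpow)
  moreover have "A powr real (2 * j - n) * A powr ((real n + 1) / 2) = A powr (2 * real j + 1 / 2 - real n / 2)"
    using n by (simp add: powr_add[symmetric] of_nat_diff algebra_simps add_divide_distrib)
  moreover have "(b / l2) powi (int n - 2 * int j) = inverse ((b / l2) ^ (2 * j - n))"
  proof -
    have "int n - 2 * int j = - int (2 * j - n)" using n by simp
    then show ?thesis by (simp only: power_int_minus power_int_of_nat)
  qed
  moreover have "P / Q * (Y / (2 * R)) = Y / (2 * inverse P * S)"
    if "Q * R = S" "Q > 0" "R > 0" for P Q R S Y :: real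
    using that by (cases "P = 0") (auto simp: field_simps)
  ultimately show ?thesis
    using A by simp
qed

lemma integral_chi_normal_term:
  fixes l1 l2 b :: real
  assumes l1: "l1 > 0" and l2: "l2 > 0"
  shows "(\<integral>v. chi_normal_term l1 l2 b j v \<partial>lborel)
       = exp (- (b\<^sup>2 / l2) * (1 - l1 / (l1 + l2)))
          * (\<Sum>n = 0..2 * j.
               real ((2 * j) choose n)
               * (Gamma ((real n + 1) / 2)
                  + c_coef n b * lower_inc_gamma ((real n + 1) / 2) (b\<^sup>2 / l2 * (l1 / (l1 + l2))))
               / (2 * (b / l2) powi (int n - 2 * int j)
                    * (1 / l1 + 1 / l2) powr (2 * real j + 1 / 2 - real n / 2)))"
proof -
  define A where "A = 1 / l1 + 1 / l2"
  define m where "m = b * l1 / (l1 + l2)"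
  have A: "A > 0" unfolding A_def using l1 l2 by (simp add: add_pos_pos)
  have frac: "1 - l1 / (l1 + l2) = l2 / (l1 + l2)"
    using l1 l2 by (simp add: field_simps)
  have E: "- (b\<^sup>2 / (l1 + l2)) = - (b\<^sup>2 / l2) * (1 - l1 / (l1 + l2))"
    unfolding frac using l2 by simp
  have Am: "A * m\<^sup>2 = b\<^sup>2 / l2 * (l1 / (l1 + l2))"
  proof -
    define D where "D = l1 + l2"
    have "D > 0" unfolding D_def using l1 l2 by simp
    then have "D / (l1 * l2) * (b * l1 / D)\<^sup>2 = b\<^sup>2 / l2 * (l1 / D)"
      using l1 l2 by (simp add: field_simps power2_eq_square)
    moreover have "A = D / (l1 * l2)"
      unfolding A_def D_def using l1 l2 by (simp add: field_simps)
    ultimately show ?thesis unfolding m_def D_def by simp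
  qed
  have c: "c_coef n m = c_coef n b" for n
    unfolding c_coef_def m_def using l1 l2 by (simp add: zero_le_divide_iff zero_le_mult_iff)
  let ?X = "\<lambda>n. Gamma ((real n + 1) / 2) + c_coef n b * lower_inc_gamma ((real n + 1) / 2) (b\<^sup>2 / l2 * (l1 / (l1 + l2)))"
  have "(\<integral>v. chi_normal_term l1 l2 b j v \<partial>lborel)
       = (\<Sum>n=0..2*j. exp (- (b\<^sup>2 / (l1 + l2))) * real (2*j choose n) * m ^ (2*j - n)
           * (?X n / (2 * A powr ((real n + 1) / 2))))"
    unfolding integral_chi_normal_term_expand[OF l1 l2] m_def[symmetric] A_def[symmetric]
    by (simp only: integral_gauss_power_scaled_atLeast[OF A] c Am)
  also have "\<dots> = (\<Sum>n=0..2*j. exp (- (b\<^sup>2 / (l1 + l2))) * (real ((2 * j) choose n) * ?X n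
           / (2 * (b / l2) powi (int n - 2 * int j) * A powr (2 * real j + 1 / 2 - real n / 2))))"
  proof (rule sum.cong[OF refl])
    fix n assume "n \<in> {0..2*j}"
    then have n: "n \<le> 2 * j" by simp
    show "exp (- (b\<^sup>2 / (l1 + l2))) * real (2*j choose n) * m ^ (2*j - n) * (?X n / (2 * A powr ((real n + 1) / 2)))
        = exp (- (b\<^sup>2 / (l1 + l2))) * (real ((2 * j) choose n) * ?X n
           / (2 * (b / l2) powi (int n - 2 * int j) * A powr (2 * real j + 1 / 2 - real n / 2)))"
      by (simp only: mult.assoc power_binomial_coefficient_rescale[OF l1 l2 n, of b "?X n", folded A_def m_def])
        (simp only: times_divide_eq_right mult.assoc)
  qed
  finally show ?thesis unfolding E A_def sum_distrib_left .
qed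

lemma integral_normal_density_atMost:
  fixes \<sigma> b :: real
  assumes s: "\<sigma> > 0"
  shows "(\<integral>v. indicator {..b} v * normal_density 0 \<sigma> v \<partial>lborel) = Qfun (- b / \<sigma>)"
proof -
  have c: "- \<sigma> \<noteq> 0" using s by simp
  have "(\<integral>v. indicator {..b} v * normal_density 0 \<sigma> v \<partial>lborel)
      = \<sigma> * (\<integral>t. indicator {..b} (0 + (- \<sigma>) * t) * normal_density 0 \<sigma> (0 + (- \<sigma>) * t) \<partial>lborel)"
    using lborel_integral_real_affine[OF c, of "\<lambda>v. indicator {..b} v * normal_density 0 \<sigma> v" 0] s by simp
  also have "(\<integral>t. indicator {..b} (0 + (- \<sigma>) * t) * normal_density 0 \<sigma> (0 + (- \<sigma>) * t) \<partial>lborel)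
      = (\<integral>t. 1 / (\<sigma> * sqrt (2 * pi)) * (indicator {- b / \<sigma>..} t * exp (- (t\<^sup>2) / 2)) \<partial>lborel)"
  proof (rule Bochner_Integration.integral_cong[OF refl])
    fix t :: real
    have "indicator {..b} (0 + (- \<sigma>) * t) = (indicator {- b / \<sigma>..} t :: real)"
      using s by (simp add: indicator_def field_simps)
    moreover have "normal_density 0 \<sigma> (0 + (- \<sigma>) * t) = 1 / (\<sigma> * sqrt (2 * pi)) * exp (- (t\<^sup>2) / 2)"
      unfolding normal_density_def using s by (simp add: power_mult_distrib real_sqrt_mult)
    ultimately show "indicator {..b} (0 + (- \<sigma>) * t) * normal_density 0 \<sigma> (0 + (- \<sigma>) * t)
        = 1 / (\<sigma> * sqrt (2 * pi)) * (indicator {- b / \<sigma>..} t * exp (- (t\<^sup>2) / 2))"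
      by simp
  qed
  also have "\<dots> = 1 / (\<sigma> * sqrt (2 * pi)) * (\<integral>t. indicator {- b / \<sigma>..} t * exp (- (t\<^sup>2) / 2) \<partial>lborel)"
    by (rule integral_mult_right_zero)
  also have "(\<integral>t. indicator {- b / \<sigma>..} t * exp (- (t\<^sup>2) / 2) \<partial>lborel)
      = (\<integral>t. indicator {- b / \<sigma><..} t * exp (- (t\<^sup>2) / 2) \<partial>lborel)"
  proof (rule integral_cong_AE)
    show "AE t in lborel. indicator {- b / \<sigma>..} t * exp (- (t\<^sup>2) / 2) = indicator {- b / \<sigma><..} t * exp (- (t\<^sup>2) / 2)"
      using AE_lborel_singleton[of "- b / \<sigma>"] by eventually_elim (auto simp: indicator_def)
  qed auto
  also have "\<dots> = (LBINT t=ereal (- b / \<sigma>)..\<infinity>. exp (- (t\<^sup>2) / 2))"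
    by (simp add: interval_lebesgue_integral_def set_lebesgue_integral_def)
  finally show ?thesis
    unfolding Qfun_def using s by (simp add: field_simps)
qed

lemma normal_density_half_variance:
  fixes s2 :: real
  assumes "s2 > 0"
  shows "normal_density 0 (sqrt (s2 / 2)) v = exp (- (v\<^sup>2) / s2) / sqrt (pi * s2)"
proof -
  have "(sqrt (s2 / 2))\<^sup>2 = s2 / 2" using assms by simp
  then show ?thesis unfolding normal_density_def using assms by (simp add: field_simps)
qed

lemma normal_density_mult_chi_cdf:
  fixes l1 l2 b v :: real
  assumes l1: "l1 > 0" and l2: "l2 > 0"
  shows "normal_density 0 (sqrt (l2 / 2)) v * chi_cdf M ((b - v) / sqrt (l1 / 2))
       = indicator {..b} v * normal_density 0 (sqrt (l2 / 2)) v
         - (\<Sum>j<M. chi_normal_term l1 l2 b j v / (Gamma (real j + 1) * l1 ^ j * sqrt (pi * l2)))"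
proof (cases "v \<le> b")
  case True
  define y where "y = (b - v) / sqrt (l1 / 2)"
  have "y \<ge> 0" unfolding y_def using True l1 by simp
  then have "normal_density 0 (sqrt (l2 / 2)) v * chi_cdf M y
      = normal_density 0 (sqrt (l2 / 2)) v - normal_density 0 (sqrt (l2 / 2)) v * chi_tail M y"
    unfolding chi_cdf_def by (simp add: algebra_simps)
  also have "normal_density 0 (sqrt (l2 / 2)) v * chi_tail M y
      = (\<Sum>j<M. chi_normal_term l1 l2 b j v / (Gamma (real j + 1) * l1 ^ j * sqrt (pi * l2)))"
    unfolding chi_tail_def sum_distrib_left
  proof (rule sum.cong[OF refl])
    fix j
    have "y\<^sup>2 / 2 = (b - v)\<^sup>2 / l1" unfolding y_def using l1 by (simp add: power_divide)
    moreover have "((b - v)\<^sup>2 / l1) ^ j = (b - v) ^ (2 * j) / l1 ^ j" by (simp add: power_divide power_mult)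
    moreover have "Gamma (real j + 1) = fact j" using Gamma_fact[of j, where 'a=real] by (simp add: add.commute)
    ultimately show "normal_density 0 (sqrt (l2 / 2)) v * (exp (- (y\<^sup>2 / 2)) * ((y\<^sup>2 / 2) ^ j / fact j))
        = chi_normal_term l1 l2 b j v / (Gamma (real j + 1) * l1 ^ j * sqrt (pi * l2))"
      unfolding chi_normal_term_def normal_density_half_variance[OF l2] using True by (simp add: mult_ac)
  qed
  finally show ?thesis using True unfolding y_def by simp
next
  case False
  then have "(b - v) / sqrt (l1 / 2) < 0" using l1 by (simp add: divide_neg_pos)
  then show ?thesis using False unfolding chi_cdf_def chi_normal_term_def by simp
qed

lemma integral_normal_density_mult_chi_cdf:
  fixes l1 l2 b :: real
  assumes l1: "l1 > 0" and l2: "l2 > 0"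
  shows "(\<integral>v. normal_density 0 (sqrt (l2 / 2)) v * chi_cdf (Suc m) ((b - v) / sqrt (l1 / 2)) \<partial>lborel)
       = re_cdf_expr (Suc m) l1 l2 b"
proof -
  let ?g = "\<lambda>j v. chi_normal_term l1 l2 b j v / (Gamma (real j + 1) * l1 ^ j * sqrt (pi * l2))"
  have "integrable lborel (\<lambda>v. indicator {..b} v * normal_density 0 (sqrt (l2 / 2)) v)"
    using integrable_real_mult_indicator[OF _ integrable_normal_density[of "sqrt (l2 / 2)" 0], of "{..b}"] l2
    by (simp add: mult.commute)
  moreover have g: "integrable lborel (?g j)" for j
    by (intro integrable_divide integrable_chi_normal_term l1 l2)
  ultimately have "(\<integral>v. normal_density 0 (sqrt (l2 / 2)) v * chi_cdf (Suc m) ((b - v) / sqrt (l1 / 2)) \<partial>lborel)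
      = (\<integral>v. indicator {..b} v * normal_density 0 (sqrt (l2 / 2)) v \<partial>lborel) - (\<Sum>j<Suc m. \<integral>v. ?g j v \<partial>lborel)"
    unfolding normal_density_mult_chi_cdf[OF l1 l2]
    by (simp add: Bochner_Integration.integral_diff Bochner_Integration.integral_sum Bochner_Integration.integrable_sum)
  also have "(\<integral>v. indicator {..b} v * normal_density 0 (sqrt (l2 / 2)) v \<partial>lborel) = Qfun (- (b * sqrt 2) / sqrt l2)"
    using l2 by (simp add: integral_normal_density_atMost real_sqrt_divide field_simps)
  also have "{..<Suc m} = {0..Suc m - 1}" by auto
  finally show ?thesis
    unfolding re_cdf_expr_def integral_divide_zero integral_chi_normal_term[OF l1 l2] times_divide_eq_left .
qed

section \<open>The distribution of \<open>Re z\<close>\<close>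

lemma (in prob_space) emeasure_affine_indep_sum:
  fixes X Y :: "'a \<Rightarrow> real" and fX fY :: "real \<Rightarrow> real" and a :: real
  assumes dX: "distributed M lborel X fX" and dY: "distributed M lborel Y fY"
    and ind: "indep_var borel X borel Y" and T[measurable]: "T \<in> sets borel"
  shows "emeasure M {\<omega> \<in> space M. a * X \<omega> + Y \<omega> \<in> T}
       = (\<integral>\<^sup>+v. ennreal (fY v) * (\<integral>\<^sup>+u. ennreal (fX u) * indicator T (a * u + v) \<partial>lborel) \<partial>lborel)"
proof -
  have "indep_var lborel X lborel Y"
    using ind unfolding indep_var_def indep_vars_def by (simp add: case_bool_if)
  then have joint: "distributed M (lborel \<Otimes>\<^sub>M lborel) (\<lambda>\<omega>. (X \<omega>, Y \<omega>)) (\<lambda>(u, v). ennreal (fX u) * ennreal (fY v))"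
    by (intro distributed_joint_indep[OF _ _ dX dY]) (simp_all add: lborel.sigma_finite_measure_axioms)
  have [measurable]: "(\<lambda>u. ennreal (fX u)) \<in> borel_measurable lborel" "(\<lambda>u. ennreal (fY u)) \<in> borel_measurable lborel"
    using dX dY by (simp_all add: distributed_def)
  let ?S = "{p :: real \<times> real. a * fst p + snd p \<in> T}"
  have S: "?S \<in> sets (lborel \<Otimes>\<^sub>M lborel)"
  proof -
    have "(\<lambda>p::real \<times> real. a * fst p + snd p) \<in> borel_measurable (lborel \<Otimes>\<^sub>M lborel)" by measurable
    from measurable_sets[OF this T] show ?thesis by (simp add: vimage_def space_pair_measure)
  qed
  have "{\<omega> \<in> space M. a * X \<omega> + Y \<omega> \<in> T} = (\<lambda>\<omega>. (X \<omega>, Y \<omega>)) -` ?S \<inter> space M" by auto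
  then have "emeasure M {\<omega> \<in> space M. a * X \<omega> + Y \<omega> \<in> T}
     = (\<integral>\<^sup>+p. (\<lambda>(u, v). ennreal (fX u) * ennreal (fY v)) p * indicator ?S p \<partial>(lborel \<Otimes>\<^sub>M lborel))"
    using distributed_emeasure[OF joint S] by simp
  also have "\<dots> = (\<integral>\<^sup>+v. (\<integral>\<^sup>+u. (\<lambda>(u, v). ennreal (fX u) * ennreal (fY v)) (u, v) * indicator ?S (u, v) \<partial>lborel) \<partial>lborel)"
    using S by (intro lborel_pair.nn_integral_snd[symmetric]) measurable
  also have "\<dots> = (\<integral>\<^sup>+v. ennreal (fY v) * (\<integral>\<^sup>+u. ennreal (fX u) * indicator T (a * u + v) \<partial>lborel) \<partial>lborel)"
  proof (rule nn_integral_cong)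
    fix v :: real
    have "(\<integral>\<^sup>+u. (\<lambda>(u, v). ennreal (fX u) * ennreal (fY v)) (u, v) * indicator ?S (u, v) \<partial>lborel)
        = (\<integral>\<^sup>+u. ennreal (fY v) * (ennreal (fX u) * indicator T (a * u + v)) \<partial>lborel)"
      by (rule nn_integral_cong) (simp add: indicator_def mult_ac)
    also have "\<dots> = ennreal (fY v) * (\<integral>\<^sup>+u. ennreal (fX u) * indicator T (a * u + v) \<partial>lborel)"
      by (rule nn_integral_cmult) measurable
    finally show "(\<integral>\<^sup>+u. (\<lambda>(u, v). ennreal (fX u) * ennreal (fY v)) (u, v) * indicator ?S (u, v) \<partial>lborel)
        = ennreal (fY v) * (\<integral>\<^sup>+u. ennreal (fX u) * indicator T (a * u + v) \<partial>lborel)" .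
  qed
  finally show ?thesis .
qed

lemma (in prob_space) emeasure_affine_indep_sum_eq:
  fixes X Y :: "'a \<Rightarrow> real" and fX fY :: "real \<Rightarrow> real" and a c :: real
  assumes "distributed M lborel X fX" and "distributed M lborel Y fY"
    and "indep_var borel X borel Y" and a: "a \<noteq> 0"
  shows "emeasure M {\<omega> \<in> space M. a * X \<omega> + Y \<omega> = c} = 0"
proof -
  have "(\<integral>\<^sup>+u. ennreal (fX u) * indicator {c} (a * u + v) \<partial>lborel) = 0" for v
  proof (rule nn_integral_zero')
    show "AE u in lborel. ennreal (fX u) * indicator {c} (a * u + v) = 0"
      using AE_lborel_singleton[of "(c - v) / a"] by eventually_elim (use a in \<open>auto simp: indicator_def field_simps\<close>)
  qed
  then show ?thesis
    using emeasure_affine_indep_sum[OF assms(1-3), where T = "{c}" and a = a] by simp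
qed

lemma nn_integral_chi_density_affine_atMost:
  fixes a b v :: real
  assumes a: "a > 0"
  shows "(\<integral>\<^sup>+u. ennreal (chi_density (2 * Suc m) u) * indicator {..b} (a * u + v) \<partial>lborel)
       = ennreal (chi_cdf (Suc m) ((b - v) / a))"
proof -
  have "indicator {..b} (a * u + v) = (indicator {..(b - v) / a} u :: ennreal)" for u
    using a by (simp add: indicator_def field_simps)
  then show ?thesis
    unfolding nn_integral_chi_density_atMost[symmetric] by presburger
qed

lemma (in prob_space) prob_chi_plus_normal_atMost:
  fixes x N :: "'a \<Rightarrow> real" and l1 l2 b :: real
  assumes dx: "distributed M lborel x (chi_density (2 * Suc m))"
    and dN: "distributed M lborel N (normal_density 0 (sqrt (l2 / 2)))"
    and ind: "indep_var borel x borel N" and l1: "l1 > 0" and l2: "l2 > 0"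
  shows "prob {\<omega> \<in> space M. sqrt (l1 / 2) * x \<omega> + N \<omega> \<le> b} = re_cdf_expr (Suc m) l1 l2 b"
proof -
  let ?f = "\<lambda>v. normal_density 0 (sqrt (l2 / 2)) v * chi_cdf (Suc m) ((b - v) / sqrt (l1 / 2))"
  have f_nonneg: "0 \<le> ?f v" for v
    by (simp add: chi_cdf_nonneg)
  have "integrable lborel ?f"
  proof (rule Bochner_Integration.integrable_bound)
    show "integrable lborel (normal_density 0 (sqrt (l2 / 2)))"
      using integrable_normal_density[of "sqrt (l2 / 2)" 0] l2 by simp
    show "AE v in lborel. norm (?f v) \<le> norm (normal_density 0 (sqrt (l2 / 2)) v)"
      using chi_cdf_nonneg chi_cdf_le_1 by (auto intro!: mult_left_le)
  qed (unfold chi_cdf_def chi_tail_def, measurable)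
  then have "(\<integral>\<^sup>+v. ennreal (?f v) \<partial>lborel) = ennreal (re_cdf_expr (Suc m) l1 l2 b)"
    by (simp add: nn_integral_eq_integral f_nonneg integral_normal_density_mult_chi_cdf[OF l1 l2])
  moreover have "emeasure M {\<omega> \<in> space M. sqrt (l1 / 2) * x \<omega> + N \<omega> \<in> {..b}}
      = (\<integral>\<^sup>+v. ennreal (normal_density 0 (sqrt (l2 / 2)) v)
           * (\<integral>\<^sup>+u. ennreal (chi_density (2 * Suc m) u) * indicator {..b} (sqrt (l1 / 2) * u + v) \<partial>lborel) \<partial>lborel)"
    by (rule emeasure_affine_indep_sum[OF dx dN ind]) simp
  moreover have "\<dots> = (\<integral>\<^sup>+v. ennreal (?f v) \<partial>lborel)"
  proof (rule nn_integral_cong)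
    have "sqrt (l1 / 2) > 0" using l1 by simp
    then show "ennreal (normal_density 0 (sqrt (l2 / 2)) v)
           * (\<integral>\<^sup>+u. ennreal (chi_density (2 * Suc m) u) * indicator {..b} (sqrt (l1 / 2) * u + v) \<partial>lborel)
        = ennreal (?f v)" for v
      by (subst nn_integral_chi_density_affine_atMost) (simp_all add: ennreal_mult chi_cdf_nonneg)
  qed
  moreover have "re_cdf_expr (Suc m) l1 l2 b \<ge> 0"
    unfolding integral_normal_density_mult_chi_cdf[OF l1 l2, symmetric] by (simp add: f_nonneg)
  ultimately show ?thesis
    by (simp add: measure_def)
qed

section \<open>The repetition event\<close>

lemma (in prob_space) prob_eq_0_or_abs_greater:
  fixes Y :: "'a \<Rightarrow> real" and s :: real
  assumes [measurable]: "Y \<in> borel_measurable M"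
    and no_atoms: "\<And>c. emeasure M {\<omega> \<in> space M. Y \<omega> = c} = 0" and s: "s \<ge> 0"
  shows "prob {\<omega> \<in> space M. Y \<omega> = 0 \<or> s < \<bar>Y \<omega>\<bar>}
       = 1 - prob {\<omega> \<in> space M. Y \<omega> \<le> s} + prob {\<omega> \<in> space M. Y \<omega> \<le> - s}"
proof -
  have AE_ne: "AE \<omega> in M. Y \<omega> \<noteq> c" for c
    using no_atoms[of c] by (intro AE_I'[of "{\<omega> \<in> space M. Y \<omega> = c}"]) (auto intro: null_setsI)
  have "prob {\<omega> \<in> space M. Y \<omega> = 0 \<or> s < \<bar>Y \<omega>\<bar>}
      = prob ({\<omega> \<in> space M. s < Y \<omega>} \<union> {\<omega> \<in> space M. Y \<omega> < - s})"
    using AE_ne[of 0] by (intro measure_eq_AE) auto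
  also have "\<dots> = prob {\<omega> \<in> space M. s < Y \<omega>} + prob {\<omega> \<in> space M. Y \<omega> < - s}"
    using s by (intro finite_measure_Union) auto
  also have "{\<omega> \<in> space M. s < Y \<omega>} = space M - {\<omega> \<in> space M. Y \<omega> \<le> s}"
    by auto
  also have "prob \<dots> = 1 - prob {\<omega> \<in> space M. Y \<omega> \<le> s}"
    by (rule prob_compl) measurable
  also have "prob {\<omega> \<in> space M. Y \<omega> < - s} = prob {\<omega> \<in> space M. Y \<omega> \<le> - s}"
    using AE_ne[of "- s"] by (intro measure_eq_AE) auto
  finally show ?thesis .
qed

lemma (in prob_space) Re_chi_plus_complex_gaussian:
  fixes x :: "'a \<Rightarrow> real" and nu :: "'a \<Rightarrow> complex" and l1 l2 :: real
  assumes dx: "distributed M lborel x (chi_density (2 * Suc m))"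
    and nu: "complex_gaussian M nu l2" and ind: "indep_var borel x borel nu"
    and l1: "l1 > 0" and l2: "l2 > 0"
  defines "Y \<equiv> \<lambda>\<omega>. sqrt (l1 / 2) * x \<omega> + Re (nu \<omega>)"
  shows "Y \<in> borel_measurable M"
    and "prob {\<omega> \<in> space M. Y \<omega> \<le> b} = re_cdf_expr (Suc m) l1 l2 b"
    and "emeasure M {\<omega> \<in> space M. Y \<omega> = c} = 0"
proof -
  have dN: "distributed M lborel (\<lambda>\<omega>. Re (nu \<omega>)) (normal_density 0 (sqrt (l2 / 2)))"
    using nu by (simp add: complex_gaussian_def)
  have ind_Re: "indep_var borel x borel (\<lambda>\<omega>. Re (nu \<omega>))"
    using indep_var_compose[OF ind, of Re borel Re borel] by (simp add: comp_def)
  have [measurable]: "x \<in> borel_measurable M" "(\<lambda>\<omega>. Re (nu \<omega>)) \<in> borel_measurable M"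
    using distributed_measurable[OF dx] distributed_measurable[OF dN] by simp_all
  show "Y \<in> borel_measurable M"
    unfolding Y_def by measurable
  show "prob {\<omega> \<in> space M. Y \<omega> \<le> b} = re_cdf_expr (Suc m) l1 l2 b"
    unfolding Y_def by (rule prob_chi_plus_normal_atMost[OF dx dN ind_Re l1 l2])
  show "emeasure M {\<omega> \<in> space M. Y \<omega> = c} = 0"
    unfolding Y_def using l1 by (intro emeasure_affine_indep_sum_eq[OF dx dN ind_Re]) simp
qed

text \<open>For \<open>Y = 0\<close> the estimate divides by zero, which HOL evaluates to \<open>0\<close>: the estimate is then
  \<open>r\<close> and the pilot is repeated. This null event does not affect the probability.\<close>

lemma repetition_condition_iff:
  fixes C s2 r eps Y :: real
  assumes C: "C \<ge> 0" and s2: "s2 > 0" and r: "r > 0" and eps: "eps < r / 2"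
  shows "r > max (C / Y\<^sup>2 - s2) r / 2 + eps \<longleftrightarrow> Y = 0 \<or> sqrt (C / (s2 + 2 * (r - eps))) < \<bar>Y\<bar>"
proof (cases "Y = 0")
  case False
  define D where "D = s2 + 2 * (r - eps)"
  have D: "D > 0" unfolding D_def using s2 r eps by simp
  have "r > max (C / Y\<^sup>2 - s2) r / 2 + eps \<longleftrightarrow> C / Y\<^sup>2 < D"
    using eps unfolding D_def by (auto simp: max_def field_simps split: if_splits)
  also have "\<dots> \<longleftrightarrow> C / D < Y\<^sup>2"
    using False D by (simp add: field_simps)
  also have "\<dots> \<longleftrightarrow> sqrt (C / D) < \<bar>Y\<bar>"
    using real_sqrt_less_iff[of _ "Y\<^sup>2"] by simp
  finally show ?thesis using False unfolding D_def by simp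
qed (use s2 r eps in \<open>simp add: max_def\<close>)

lemma effective_noise_variances_pos:
  fixes rho beta :: "'u \<Rightarrow> real" and q s2 omega ups :: real
  assumes "tau \<ge> 1" and "finite S" and "k \<in> S"
    and "\<And>i. i \<in> S \<Longrightarrow> rho i > 0" and "\<And>i. i \<in> S \<Longrightarrow> beta i > 0"
    and "q > 0" and "s2 > 0" and "omega \<ge> 0" and "ups \<ge> 0"
  defines "l1 \<equiv> rho k * q * (beta k)\<^sup>2 * (real tau)\<^sup>2 / ((\<Sum>i\<in>S. rho i * beta i * real tau) + omega + s2)"
  shows "l1 > 0" and "s2 + ups + q * beta k * real tau - l1 > 0"
proof -
  define r where "r = rho k * beta k * real tau"
  define g where "g = q * beta k * real tau"
  define a where "a = (\<Sum>i\<in>S. rho i * beta i * real tau) + omega + s2"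
  have "r > 0" and "g > 0"
    unfolding r_def g_def using assms(1,3-6) by simp_all
  moreover have "r \<le> (\<Sum>i\<in>S. rho i * beta i * real tau)"
    unfolding r_def using assms(2-5) by (intro member_le_sum) (auto intro!: mult_nonneg_nonneg simp: less_imp_le)
  then have "r < a" unfolding a_def using assms(7,8) by simp
  moreover have "l1 = g * (r / a)"
    unfolding l1_def r_def g_def a_def by (simp add: power2_eq_square mult_ac)
  ultimately have "0 < l1" and "l1 < g"
    using mult_strict_left_mono[of "r / a" 1 g] by simp_all
  then show "l1 > 0" and "s2 + ups + q * beta k * real tau - l1 > 0"
    using assms(7,9) unfolding g_def by simp_all
qed

theorem theorem2:
  fixes P :: "'w measure"
    and M :: nat and tau_p :: nat
    and S :: "'u set" and k :: 'u
    and rho beta :: "'u \<Rightarrow> real"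
    and q sigma2 omega Upsilon eps :: real
    and x :: "'w \<Rightarrow> real" and nu :: "'w \<Rightarrow> complex"
  defines "alpha \<equiv> (\<Sum>i\<in>S. rho i * beta i * real tau_p) + omega"
  defines "lambda1 \<equiv> rho k * q * (beta k)\<^sup>2 * (real tau_p)\<^sup>2 / (alpha + sigma2)"
  defines "lambda2 \<equiv> sigma2 + Upsilon + q * beta k * real tau_p - lambda1"
  defines "z \<equiv> (\<lambda>w. complex_of_real (sqrt (lambda1 / 2) * x w) + nu w)"
  defines "Cg \<equiv> (Gamma (real M + 1 / 2) / Gamma (real M))\<^sup>2"
  defines "alpha_hat \<equiv> (\<lambda>w. max (Cg * q * rho k * (beta k)\<^sup>2 * (real tau_p)\<^sup>2 / (Re (z w))\<^sup>2 - sigma2)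
                                  (rho k * beta k * real tau_p))"
  defines "R \<equiv> {w \<in> space P. rho k * beta k * real tau_p > alpha_hat w / 2 + eps}"
  defines "zeta \<equiv> Cg * q * rho k * (beta k)\<^sup>2 * (real tau_p)\<^sup>2 / (sigma2 + 2 * (rho k * beta k * real tau_p - eps))"
  assumes "prob_space P"
    and "M \<ge> 1" and "tau_p \<ge> 1"
    and "finite S" and "k \<in> S"
    and "\<And>i. i \<in> S \<Longrightarrow> rho i > 0"
    and "\<And>i. i \<in> S \<Longrightarrow> beta i > 0"
    and "q > 0" and "sigma2 > 0" and "omega \<ge> 0" and "Upsilon \<ge> 0"
    and "eps < rho k * beta k * real tau_p / 2"
    and "distributed P lborel x (chi_density (2 * M))"
    and "complex_gaussian P nu lambda2"
    and "prob_space.indep_var P borel x borel nu"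
  shows "measure P R = 1 - measure P {w \<in> space P. Re (z w) \<le> sqrt zeta}
                         + measure P {w \<in> space P. Re (z w) \<le> - sqrt zeta}
         \<and> (\<forall>b. measure P {w \<in> space P. Re (z w) \<le> b} = re_cdf_expr M lambda1 lambda2 b)"
proof -
  interpret prob_space P by fact
  obtain m where M: "M = Suc m" using \<open>M \<ge> 1\<close> by (cases M) auto
  have l1: "lambda1 > 0" and l2: "lambda2 > 0"
    using effective_noise_variances_pos[OF assms(11-19)]
    unfolding lambda1_def lambda2_def alpha_def by (simp_all add: add.assoc)
  have Re_z: "Re (z w) = sqrt (lambda1 / 2) * x w + Re (nu w)" for w
    unfolding z_def by simp
  have "distributed P lborel x (chi_density (2 * Suc m))"
    using \<open>distributed P lborel x (chi_density (2 * M))\<close> unfolding M .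
  note Re_z_distribution = Re_chi_plus_complex_gaussian[OF this assms(22,23) l1 l2, folded Re_z]
  have C: "Cg * q * rho k * (beta k)\<^sup>2 * (real tau_p)\<^sup>2 \<ge> 0" and r: "rho k * beta k * real tau_p > 0"
    unfolding Cg_def using \<open>q > 0\<close> \<open>tau_p \<ge> 1\<close> assms(14,15)[OF \<open>k \<in> S\<close>] by simp_all
  note repetition = repetition_condition_iff[OF C \<open>sigma2 > 0\<close> r \<open>eps < rho k * beta k * real tau_p / 2\<close>]
  have "R = {w \<in> space P. Re (z w) = 0 \<or> sqrt zeta < \<bar>Re (z w)\<bar>}"
    unfolding R_def alpha_hat_def zeta_def repetition ..
  moreover have "zeta \<ge> 0"
    unfolding zeta_def using C r \<open>sigma2 > 0\<close> \<open>eps < rho k * beta k * real tau_p / 2\<close> by simp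
  ultimately show ?thesis
    using prob_eq_0_or_abs_greater[OF Re_z_distribution(1,3)] Re_z_distribution(2) unfolding M by simp
qed

end
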